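(* Let $\lambda$ be a partition of $n$ and $t$ a tableau of shape $\lambda$. Then $\phi(\mathbf{e}_t)=\sum_{\pi\in C_t}\mathrm{sgn}(\pi)\,\pi^{-1}\circ\phi(\{t\})$.
   Context: For $\pi\in\mathrm{Sym}_n$ and a tableau $t$ of shape $\lambda$ (filling of the Young diagram with $1,\ldots,n$), $\pi(t)$ replaces each entry $x$ by $\pi(x)$. The $\lambda$-tabloid $\{t\}$ is the set of all tableaux obtained from $t$ by permuting entries within rows. $C_t$ is the column-stabilizer of $t$ (permutations preserving each column's set of entries). The polytabloid is $\mathbf{e}_t=\sum_{\sigma\in C_t}\mathrm{sgn}(\sigma)\{\sigma(t)\}\in M^\lambda$, where $M^\lambda$ is the complex vector space with basis the $\lambda$-tabloids. $id_\lambda$ is the standard tableau whose rows consist of consecutive numbers, $\tau_t$ is the unique permutation with $\tau_t(t)=id_\lambda$, and $\phi:M^\lambda\to\mathbb{C}[\mathrm{Sym}_n]$ is the linear map with $\phi(\{t\})=\sum_{t'\in\{t\}}\tau_{t'}$. Permutations are composed so that $(\alpha\circ\beta)(x)=\beta(\alpha(x))$, and $\sigma\circ\sum a_\pi\pi=\sum a_\pi(\sigma\circ\pi)$. *)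

theory Defs
  imports "HOL-Combinatorics.Permutations" Complex_Main
begin

definition is_partition :: "nat \<Rightarrow> nat list \<Rightarrow> bool" where
  "is_partition n lam \<longleftrightarrow> sorted_wrt (\<ge>) lam \<and> (\<forall>k\<in>set lam. 0 < k) \<and> sum_list lam = n"

definition cells :: "nat list \<Rightarrow> (nat \<times> nat) set" where
  "cells lam = {(i, j). i < length lam \<and> j < lam ! i}"

definition row :: "nat list \<Rightarrow> nat \<Rightarrow> (nat \<times> nat) set" where
  "row lam i = {c \<in> cells lam. fst c = i}"

definition col :: "nat list \<Rightarrow> nat \<Rightarrow> (nat \<times> nat) set" where
  "col lam j = {c \<in> cells lam. snd c = j}"

definition Sym :: "nat \<Rightarrow> (nat \<Rightarrow> nat) set" where
  "Sym n = {p. p permutes {1..n}}"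

definition tableau :: "nat list \<Rightarrow> (nat \<times> nat \<Rightarrow> nat) \<Rightarrow> bool" where
  "tableau lam t \<longleftrightarrow> bij_betw t (cells lam) {1..sum_list lam} \<and> (\<forall>c. c \<notin> cells lam \<longrightarrow> t c = 0)"

(* pi(t) replaces each entry x by pi x: this is  pi \<circ> t  *)

definition tabloid :: "nat list \<Rightarrow> (nat \<times> nat \<Rightarrow> nat) \<Rightarrow> (nat \<times> nat \<Rightarrow> nat) set" where
  "tabloid lam t = {t'. tableau lam t' \<and> (\<forall>i. t' ` row lam i = t ` row lam i)}"

definition tabloids :: "nat list \<Rightarrow> (nat \<times> nat \<Rightarrow> nat) set set" where
  "tabloids lam = {tabloid lam t | t. tableau lam t}"

definition colstab :: "nat list \<Rightarrow> (nat \<times> nat \<Rightarrow> nat) \<Rightarrow> (nat \<Rightarrow> nat) set" where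
  "colstab lam t = {s \<in> Sym (sum_list lam). \<forall>j. s ` (t ` col lam j) = t ` col lam j}"

(* M^lambda: complex-valued coefficient functions on tabloids; basis vector of a tabloid *)
definition basisM :: "(nat \<times> nat \<Rightarrow> nat) set \<Rightarrow> ((nat \<times> nat \<Rightarrow> nat) set \<Rightarrow> complex)" where
  "basisM T = (\<lambda>T'. if T' = T then 1 else 0)"

definition polytabloid :: "nat list \<Rightarrow> (nat \<times> nat \<Rightarrow> nat) \<Rightarrow> ((nat \<times> nat \<Rightarrow> nat) set \<Rightarrow> complex)" where
  "polytabloid lam t = (\<lambda>T. \<Sum>s\<in>colstab lam t. of_int (sign s) * basisM (tabloid lam (s \<circ> t)) T)"

definition id_tab :: "nat list \<Rightarrow> (nat \<times> nat \<Rightarrow> nat)" where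
  "id_tab lam = (\<lambda>(i, j). if (i, j) \<in> cells lam then sum_list (take i lam) + j + 1 else 0)"

definition tau :: "nat list \<Rightarrow> (nat \<times> nat \<Rightarrow> nat) \<Rightarrow> (nat \<Rightarrow> nat)" where
  "tau lam t = (THE p. p \<in> Sym (sum_list lam) \<and> p \<circ> t = id_tab lam)"

(* group algebra C[Sym_n]: complex-valued coefficient functions on permutations *)
definition delta :: "(nat \<Rightarrow> nat) \<Rightarrow> ((nat \<Rightarrow> nat) \<Rightarrow> complex)" where
  "delta p = (\<lambda>q. if q = p then 1 else 0)"

(* paper's composition: (alpha o beta)(x) = beta(alpha x), i.e. Isabelle's  beta \<circ> alpha.
   sigma o (sum a_pi pi) = sum a_pi (sigma o pi) *)
definition lmult :: "nat \<Rightarrow> (nat \<Rightarrow> nat) \<Rightarrow> ((nat \<Rightarrow> nat) \<Rightarrow> complex) \<Rightarrow> ((nat \<Rightarrow> nat) \<Rightarrow> complex)" where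
  "lmult n s a = (\<lambda>q. \<Sum>p\<in>Sym n. a p * delta (p \<circ> s) q)"

definition phi :: "nat list \<Rightarrow> ((nat \<times> nat \<Rightarrow> nat) set \<Rightarrow> complex) \<Rightarrow> ((nat \<Rightarrow> nat) \<Rightarrow> complex)" where
  "phi lam v = (\<lambda>q. \<Sum>T\<in>tabloids lam. v T * (\<Sum>t'\<in>T. delta (tau lam t') q))"

end

theory Submission
  imports Defs
begin

text \<open>Since \<open>\<tau>\<^bsub>\<sigma>(t')\<^esub> = \<tau>\<^bsub>t'\<^esub> \<circ> \<sigma>\<inverse>\<close> and \<open>\<sigma>\<close> maps the tabloid \<open>{t}\<close> bijectively onto
  \<open>{\<sigma>(t)}\<close>, the map \<open>\<phi>\<close> intertwines the action of \<open>\<sigma>\<close> on tabloids with left multiplication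
  by \<open>\<sigma>\<inverse>\<close> in the group algebra; the claim then follows from the linearity of \<open>\<phi>\<close>.\<close>

lemma permutes_transfer:
  assumes f: "bij_betw f A B" and g: "bij_betw g A B"
    and outside: "\<And>x. x \<notin> A \<Longrightarrow> f x = g x \<and> f x \<notin> B"
  shows "\<exists>!p. p permutes B \<and> p \<circ> f = g"
proof (rule ex_ex1I)
  define p where "p = (\<lambda>y. if y \<in> B then g (inv_into A f y) else y)"
  have "bij_betw (g \<circ> inv_into A f) B B"
    using bij_betw_trans[OF bij_betw_inv_into[OF f] g] .
  then have "bij_betw p B B"
    by (rule bij_betw_cong[THEN iffD1, rotated]) (simp add: p_def)
  then have "p permutes B"
    by (rule bij_imp_permutes) (simp add: p_def)
  moreover have "p \<circ> f = g"
  proof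
    fix x
    show "(p \<circ> f) x = g x"
      using f outside[of x] bij_betwE[OF f] by (cases "x \<in> A") (auto simp: p_def bij_betw_inv_into_left)
  qed
  ultimately show "\<exists>p. p permutes B \<and> p \<circ> f = g" by blast
next
  fix p q assume p: "p permutes B \<and> p \<circ> f = g" and q: "q permutes B \<and> q \<circ> f = g"
  show "p = q"
  proof
    fix y
    show "p y = q y"
    proof (cases "y \<in> B")
      case True
      then obtain x where "y = f x" using f by (auto simp: bij_betw_def)
      then show ?thesis using p q by (metis comp_apply)
    next
      case False
      then show ?thesis using p q by (metis permutes_not_in)
    qed
  qed
qed

lemma sum_list_take_mono: "i \<le> k \<Longrightarrow> sum_list (take i (xs :: nat list)) \<le> sum_list (take k xs)"
  by (metis le_add1 le_add_diff_inverse sum_list_append take_add)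

lemma sum_list_take_Suc:
  "i < length xs \<Longrightarrow> sum_list (take (Suc i) (xs :: nat list)) = sum_list (take i xs) + xs ! i"
  by (simp add: take_Suc_conv_app_nth)

lemma tableau_outside: "tableau lam t \<Longrightarrow> c \<notin> cells lam \<Longrightarrow> t c = 0"
  by (cases c) (simp add: tableau_def)

lemma finite_cells: "tableau lam t \<Longrightarrow> finite (cells lam)"
  unfolding tableau_def using bij_betw_finite by blast

lemma inj_on_id_tab: "inj_on (id_tab lam) (cells lam)"
proof (rule inj_onI)
  fix a b assume a: "a \<in> cells lam" and b: "b \<in> cells lam" and eq: "id_tab lam a = id_tab lam b"
  obtain i j i' j' where ij: "a = (i, j)" "b = (i', j')" by force
  have bounds: "i < length lam" "j < lam ! i" "i' < length lam" "j' < lam ! i'"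
    using a b ij by (auto simp: cells_def)
  have offsets: "sum_list (take i lam) + j = sum_list (take i' lam) + j'"
    using eq a b ij by (simp add: id_tab_def)
  have "\<not> i < i'"
    if "i < i'" "i < length lam" "j < lam ! i" "sum_list (take i lam) + j = sum_list (take i' lam) + j'"
    for i i' j j'
  proof -
    have "sum_list (take (Suc i) lam) \<le> sum_list (take i' lam)"
      using \<open>i < i'\<close> by (simp add: sum_list_take_mono)
    then show ?thesis using that sum_list_take_Suc[of i lam] by linarith
  qed
  then have "\<not> i < i'" and "\<not> i' < i" using bounds offsets by metis+
  then show "a = b" using offsets ij by simp
qed

lemma id_tab_in_range: "c \<in> cells lam \<Longrightarrow> id_tab lam c \<in> {1..sum_list lam}"
proof -
  assume c: "c \<in> cells lam"
  obtain i j where ij: "c = (i, j)" by force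
  have bounds: "i < length lam" "j < lam ! i" using c ij by (auto simp: cells_def)
  have "sum_list (take (Suc i) lam) \<le> sum_list (take (length lam) lam)"
    using bounds sum_list_take_mono[of "Suc i" "length lam" lam] by simp
  then show ?thesis using c ij bounds sum_list_take_Suc[of i lam] by (simp add: id_tab_def)
qed

lemma tableau_id_tab:
  assumes "tableau lam t"
  shows "tableau lam (id_tab lam)"
proof -
  have "card (cells lam) = card {1..sum_list lam}"
    using assms unfolding tableau_def by (blast intro: bij_betw_same_card)
  then have "card (id_tab lam ` cells lam) = card {1..sum_list lam}"
    using card_image[OF inj_on_id_tab] by simp
  then have "id_tab lam ` cells lam = {1..sum_list lam}"
    using id_tab_in_range by (intro card_subset_eq) auto
  moreover have "id_tab lam c = 0" if "c \<notin> cells lam" for c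
    using that by (cases c) (simp add: id_tab_def)
  ultimately show ?thesis
    using inj_on_id_tab by (simp add: tableau_def bij_betw_def)
qed

lemma tableaux_ex1_permutes:
  assumes "tableau lam t" "tableau lam t'"
  shows "\<exists>!p. p permutes {1..sum_list lam} \<and> p \<circ> t = t'"
proof (rule permutes_transfer)
  show "bij_betw t (cells lam) {1..sum_list lam}" "bij_betw t' (cells lam) {1..sum_list lam}"
    using assms by (simp_all add: tableau_def)
  show "t x = t' x \<and> t x \<notin> {1..sum_list lam}" if "x \<notin> cells lam" for x
    using that tableau_outside[OF assms(1)] tableau_outside[OF assms(2)] by simp
qed

lemma tau_props:
  assumes "tableau lam t"
  shows "tau lam t \<in> Sym (sum_list lam)" and "tau lam t \<circ> t = id_tab lam"
proof -
  have "tau lam t \<in> Sym (sum_list lam) \<and> tau lam t \<circ> t = id_tab lam"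
    unfolding tau_def Sym_def mem_Collect_eq
    by (rule theI'[OF tableaux_ex1_permutes[OF assms tableau_id_tab[OF assms]]])
  then show "tau lam t \<in> Sym (sum_list lam)" and "tau lam t \<circ> t = id_tab lam" by simp_all
qed

lemma tau_eqI:
  assumes "tableau lam t" "p \<in> Sym (sum_list lam)" "p \<circ> t = id_tab lam"
  shows "tau lam t = p"
  using tableaux_ex1_permutes[OF assms(1) tableau_id_tab[OF assms(1)]] assms(2,3) tau_props[OF assms(1)]
  by (auto simp: Sym_def)

lemma tableau_comp:
  assumes s: "s \<in> Sym (sum_list lam)" and t: "tableau lam t"
  shows "tableau lam (s \<circ> t)"
proof -
  have sp: "s permutes {1..sum_list lam}" using s by (simp add: Sym_def)
  have "bij_betw (s \<circ> t) (cells lam) {1..sum_list lam}"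
    using t permutes_imp_bij[OF sp] by (auto simp: tableau_def intro: bij_betw_trans)
  then show ?thesis
    using tableau_outside[OF t] permutes_not_in[OF sp] by (simp add: tableau_def)
qed

lemma tau_comp:
  assumes s: "s \<in> Sym (sum_list lam)" and t: "tableau lam t"
  shows "tau lam (s \<circ> t) = tau lam t \<circ> inv s"
proof (rule tau_eqI[OF tableau_comp[OF s t]])
  have sp: "s permutes {1..sum_list lam}" using s by (simp add: Sym_def)
  show "tau lam t \<circ> inv s \<in> Sym (sum_list lam)"
    using tau_props(1)[OF t] sp by (simp add: Sym_def permutes_compose permutes_inv)
  have "tau lam t \<circ> inv s \<circ> (s \<circ> t) = tau lam t \<circ> (inv s \<circ> s) \<circ> t" by (simp add: comp_assoc)
  also have "\<dots> = id_tab lam" using permutes_inv_o(2)[OF sp] tau_props(2)[OF t] by simp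
  finally show "tau lam t \<circ> inv s \<circ> (s \<circ> t) = id_tab lam" .
qed

lemma comp_mem_tabloid:
  assumes "s \<in> Sym (sum_list lam)" "t' \<in> tabloid lam t"
  shows "s \<circ> t' \<in> tabloid lam (s \<circ> t)"
proof -
  have "tableau lam t'" "\<And>i. t' ` row lam i = t ` row lam i"
    using assms(2) by (auto simp: tabloid_def)
  moreover have "(s \<circ> t') ` row lam i = (s \<circ> t) ` row lam i" for i
    unfolding image_comp[symmetric] by (simp add: \<open>\<And>i. t' ` row lam i = t ` row lam i\<close>)
  ultimately show ?thesis
    using tableau_comp[OF assms(1)] unfolding tabloid_def mem_Collect_eq by blast
qed

lemma tabloid_comp:
  assumes s: "s \<in> Sym (sum_list lam)"
  shows "tabloid lam (s \<circ> t) = (\<circ>) s ` tabloid lam t"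
proof
  show "(\<circ>) s ` tabloid lam t \<subseteq> tabloid lam (s \<circ> t)"
    using comp_mem_tabloid[OF s] by blast
next
  have sp: "s permutes {1..sum_list lam}" using s by (simp add: Sym_def)
  have s_inv: "inv s \<in> Sym (sum_list lam)" using sp by (simp add: Sym_def permutes_inv)
  show "tabloid lam (s \<circ> t) \<subseteq> (\<circ>) s ` tabloid lam t"
  proof
    fix x assume "x \<in> tabloid lam (s \<circ> t)"
    then have "inv s \<circ> x \<in> tabloid lam (inv s \<circ> (s \<circ> t))"
      by (rule comp_mem_tabloid[OF s_inv])
    moreover have "inv s \<circ> (s \<circ> t) = t" and "x = s \<circ> (inv s \<circ> x)"
      using permutes_inv_o[OF sp] by (simp_all add: comp_assoc[symmetric])
    ultimately show "x \<in> (\<circ>) s ` tabloid lam t" by auto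
  qed
qed

lemma finite_tabloids:
  assumes t: "tableau lam t"
  shows "finite (tabloids lam)"
proof -
  let ?F = "{f. \<forall>x. (x \<in> cells lam \<longrightarrow> f x \<in> {1..sum_list lam}) \<and> (x \<notin> cells lam \<longrightarrow> f x = 0)}"
  have "finite ?F"
    by (rule finite_set_of_finite_funs) (use finite_cells[OF t] in auto)
  moreover have "{t'. tableau lam t'} \<subseteq> ?F"
    by (auto simp: tableau_def bij_betw_def)
  moreover have "tabloids lam \<subseteq> Pow {t'. tableau lam t'}"
    by (auto simp: tabloids_def tabloid_def)
  ultimately show ?thesis
    by (meson finite_Pow_iff finite_subset)
qed

lemma phi_sum:
  "phi lam (\<lambda>T. \<Sum>s\<in>S. c s * v s T) = (\<lambda>q. \<Sum>s\<in>S. c s * phi lam (v s) q)"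
proof
  fix q
  let ?X = "\<lambda>T. \<Sum>t'\<in>T. delta (tau lam t') q"
  have "phi lam (\<lambda>T. \<Sum>s\<in>S. c s * v s T) q = (\<Sum>T\<in>tabloids lam. \<Sum>s\<in>S. c s * (v s T * ?X T))"
    by (simp add: phi_def sum_distrib_right mult.assoc)
  also have "\<dots> = (\<Sum>s\<in>S. c s * (\<Sum>T\<in>tabloids lam. v s T * ?X T))"
    by (subst sum.swap) (simp add: sum_distrib_left)
  finally show "phi lam (\<lambda>T. \<Sum>s\<in>S. c s * v s T) q = (\<Sum>s\<in>S. c s * phi lam (v s) q)"
    by (simp add: phi_def)
qed

lemma phi_basisM:
  assumes "tableau lam t"
  shows "phi lam (basisM (tabloid lam t)) q = (\<Sum>t'\<in>tabloid lam t. delta (tau lam t') q)"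
proof -
  have "tabloid lam t \<in> tabloids lam" using assms by (auto simp: tabloids_def)
  then show ?thesis
    unfolding phi_def basisM_def using finite_tabloids[OF assms]
    by (simp add: if_distrib[of "\<lambda>x. x * _"] cong: if_cong)
qed

lemma lmult_sum_delta:
  assumes "f ` A \<subseteq> Sym n"
  shows "lmult n s (\<lambda>q. \<Sum>x\<in>A. delta (f x) q) q = (\<Sum>x\<in>A. delta (f x \<circ> s) q)"
proof -
  have "lmult n s (\<lambda>q. \<Sum>x\<in>A. delta (f x) q) q = (\<Sum>x\<in>A. \<Sum>p\<in>Sym n. delta (f x) p * delta (p \<circ> s) q)"
    unfolding lmult_def by (simp add: sum_distrib_right sum.swap[of _ "Sym n"])
  also have "\<dots> = (\<Sum>x\<in>A. delta (f x \<circ> s) q)"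
  proof (rule sum.cong[OF refl])
    fix x assume "x \<in> A"
    then have "f x \<in> Sym n" using assms by blast
    moreover have "finite (Sym n)" unfolding Sym_def by (rule finite_permutations) simp
    ultimately show "(\<Sum>p\<in>Sym n. delta (f x) p * delta (p \<circ> s) q) = delta (f x \<circ> s) q"
      by (simp add: delta_def[of "f x"] if_distrib[of "\<lambda>x. x * _"] cong: if_cong)
  qed
  finally show ?thesis .
qed

lemma phi_basisM_comp:
  assumes s: "s \<in> Sym (sum_list lam)" and t: "tableau lam t"
  shows "phi lam (basisM (tabloid lam (s \<circ> t))) =
    lmult (sum_list lam) (inv s) (phi lam (basisM (tabloid lam t)))"
proof
  fix q
  have inj: "inj_on ((\<circ>) s) (tabloid lam t)"
    using s unfolding Sym_def mem_Collect_eq by (intro inj_onI) (metis comp_assoc id_comp permutes_inv_o(2))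
  have tableaux: "\<And>t'. t' \<in> tabloid lam t \<Longrightarrow> tableau lam t'" by (simp add: tabloid_def)
  have "phi lam (basisM (tabloid lam (s \<circ> t))) q = (\<Sum>t'\<in>tabloid lam (s \<circ> t). delta (tau lam t') q)"
    by (rule phi_basisM[OF tableau_comp[OF s t]])
  also have "\<dots> = (\<Sum>t'\<in>tabloid lam t. delta (tau lam (s \<circ> t')) q)"
    unfolding tabloid_comp[OF s] sum.reindex[OF inj] by simp
  also have "\<dots> = (\<Sum>t'\<in>tabloid lam t. delta (tau lam t' \<circ> inv s) q)"
    using tau_comp[OF s tableaux] by simp
  also have "\<dots> = lmult (sum_list lam) (inv s) (phi lam (basisM (tabloid lam t))) q"
    using tau_props(1)[OF tableaux] by (subst phi_basisM[OF t, abs_def], subst lmult_sum_delta) auto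
  finally show "phi lam (basisM (tabloid lam (s \<circ> t))) q =
    lmult (sum_list lam) (inv s) (phi lam (basisM (tabloid lam t))) q" .
qed

theorem lemma5:
  fixes n :: nat and lam :: "nat list" and t :: "nat \<times> nat \<Rightarrow> nat"
  assumes "is_partition n lam"
    and "tableau lam t"
  shows "phi lam (polytabloid lam t) =
    (\<lambda>q. \<Sum>p\<in>colstab lam t. of_int (sign p) * lmult n (inv p) (phi lam (basisM (tabloid lam t))) q)"
proof -
  have n: "n = sum_list lam" using assms(1) by (simp add: is_partition_def)
  have "phi lam (polytabloid lam t) =
      (\<lambda>q. \<Sum>p\<in>colstab lam t. of_int (sign p) * phi lam (basisM (tabloid lam (p \<circ> t))) q)"
    unfolding polytabloid_def by (rule phi_sum)
  also have "\<dots> = (\<lambda>q. \<Sum>p\<in>colstab lam t. of_int (sign p) * lmult n (inv p) (phi lam (basisM (tabloid lam t))) q)"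
    using phi_basisM_comp[OF _ assms(2)] by (simp add: n colstab_def)
  finally show ?thesis .
qed

end
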